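(* Under the standing setup, for integers $K\ge1$ and $n>K$, and a vertex $v$ with $|v|=n$, let $I_v^K$ be the set of edges of $I_v$ belonging to generations $n-K+1,\dots,n$, and define $\tilde N_n^{(K)}:=\sum_{|v|=n}\sum_{e\in I_v^K}\delta_{b_n^{-1}X_e}$. Let also $\tilde N_n:=\sum_{|v|=n}\sum_{e\in I_v}\delta_{b_n^{-1}X_e}$. Then for every $\epsilon>0$, $$\lim_{K\to\infty}\limsup_{n\to\infty}P^*\big(\rho(\tilde N_n,\tilde N_n^{(K)})>\epsilon\big)=0.$$
   Context: Standing setup. Let $\{Z_i\}_{i\ge0}$ be a Galton–Watson process with $Z_0\equiv1$ and offspring variable $Z_1$ with mean $\mu:=E(Z_1)\in(1,\infty)$, satisfying $E(Z_1\log^+Z_1)<\infty$, with genealogical tree rooted at $o$. For a vertex $v$, $|v|$ is its generation and $I_v$ the set of edges of the path from $o$ to $v$; each edge is identified with its endpoint farther from the root and belongs to generation $m$ if that endpoint has generation $m$. Independently of the tree, attach i.i.d. real random variables $X_e$ to the edges with $P(|X_e|>x)=x^{-\alpha}L(x)$ ($\alpha>0$, $L$ slowly varying) and $P(X_e>x)/P(|X_e|>x)\to p$, $P(X_e<-x)/P(|X_e|>x)\to q$, $p,q\ge0$, $p+q=1$. Let $b_n>0$ satisfy $\mu^nP(b_n^{-1}X_e\in\cdot)\to\nu_\alpha$ vaguely on $\mathbb E:=[-\infty,\infty]\setminus\{0\}$, with $\nu_\alpha(dx)=\alpha px^{-\alpha-1}\mathbf 1_{(0,\infty)}(x)dx+\alpha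 q(-x)^{-\alpha-1}\mathbf 1_{(-\infty,0)}(x)dx$. $P^*$ denotes conditioning on survival. $\rho$ is a metric on the space $\mathscr M$ of Radon point measures on $\mathbb E$ of the form $\rho(m_1,m_2)=\sum_{i\ge1}2^{-i}\min(|m_1(h_i)-m_2(h_i)|,1)$, where $\{h_i\}$ is a fixed sequence of nonnegative Lipschitz continuous compactly supported functions on $\mathbb E$ chosen so that $\rho$ metrizes the vague topology. *)

theory Defs
  imports "HOL-Probability.Probability"
begin

text \<open>Ulam--Harris encoding of the Galton--Watson tree: potential vertices are
  lists of natural numbers, the root is the empty list, and xi u w is the number
  of children of the potential vertex u.\<close>

definition in_tree :: "(nat list \<Rightarrow> 'a \<Rightarrow> nat) \<Rightarrow> 'a \<Rightarrow> nat list \<Rightarrow> bool" where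
  "in_tree xi w v \<longleftrightarrow> (\<forall>k < length v. v ! k < xi (take k v) w)"

definition gen :: "(nat list \<Rightarrow> 'a \<Rightarrow> nat) \<Rightarrow> nat \<Rightarrow> 'a \<Rightarrow> nat list set" where
  "gen xi n w = {v. length v = n \<and> in_tree xi w v}"

text \<open>The edge of generation m on the path to v is identified with its endpoint take m v.
  Ntilde_n(h) = sum over |v| = n, e in I_v, of h(X_e / b_n).\<close>
definition Ntilde :: "(nat list \<Rightarrow> 'a \<Rightarrow> nat) \<Rightarrow> (nat list \<Rightarrow> 'a \<Rightarrow> real) \<Rightarrow> (nat \<Rightarrow> real)
    \<Rightarrow> nat \<Rightarrow> (real \<Rightarrow> real) \<Rightarrow> 'a \<Rightarrow> real" where
  "Ntilde xi X b n h w = (\<Sum>v\<in>gen xi n w. \<Sum>m\<in>{1..n}. h (X (take m v) w / b n))"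

definition NtildeK :: "(nat list \<Rightarrow> 'a \<Rightarrow> nat) \<Rightarrow> (nat list \<Rightarrow> 'a \<Rightarrow> real) \<Rightarrow> (nat \<Rightarrow> real)
    \<Rightarrow> nat \<Rightarrow> nat \<Rightarrow> (real \<Rightarrow> real) \<Rightarrow> 'a \<Rightarrow> real" where
  "NtildeK xi X b K n h w = (\<Sum>v\<in>gen xi n w. \<Sum>m\<in>{n - K<..n}. h (X (take m v) w / b n))"

text \<open>The metric rho(m1,m2) = sum_{i>=1} 2^{-i} min(|m1(h_i) - m2(h_i)|, 1),
  point measures being represented by their action on test functions.\<close>
definition rho_pm :: "(nat \<Rightarrow> real \<Rightarrow> real) \<Rightarrow> ((real \<Rightarrow> real) \<Rightarrow> real)
    \<Rightarrow> ((real \<Rightarrow> real) \<Rightarrow> real) \<Rightarrow> real" where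
  "rho_pm hs m1 m2 = (\<Sum>i. (1/2) ^ (Suc i) * min \<bar>m1 (hs (Suc i)) - m2 (hs (Suc i))\<bar> 1)"

definition slowly_varying :: "(real \<Rightarrow> real) \<Rightarrow> bool" where
  "slowly_varying L \<longleftrightarrow> (\<forall>\<^sub>F x in at_top. L x > 0) \<and>
     (\<forall>t>0. ((\<lambda>x. L (t * x) / L x) \<longlongrightarrow> 1) at_top)"

text \<open>A real function represents a function on E = [-inf,inf] minus {0} with compact support
  iff it vanishes on a neighbourhood of 0 and has finite limits at +-inf (its values at +-inf).\<close>
definition compact_supp_E :: "(real \<Rightarrow> real) \<Rightarrow> bool" where
  "compact_supp_E f \<longleftrightarrow> (\<exists>d>0. \<forall>x. \<bar>x\<bar> < d \<longrightarrow> f x = 0) \<and>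
     (\<exists>l. (f \<longlongrightarrow> l) at_top) \<and> (\<exists>l. (f \<longlongrightarrow> l) at_bot)"

definition vague_test :: "(real \<Rightarrow> real) \<Rightarrow> bool" where
  "vague_test f \<longleftrightarrow> continuous_on UNIV f \<and> compact_supp_E f"

text \<open>nu_alpha, which puts no mass at +-inf, as a measure on the reals.\<close>
definition nu_alpha :: "real \<Rightarrow> real \<Rightarrow> real \<Rightarrow> real measure" where
  "nu_alpha \<alpha> p q = density lborel (\<lambda>x. ennreal
     (if x > 0 then \<alpha> * p * x powr (-\<alpha> - 1)
      else if x < 0 then \<alpha> * q * (-x) powr (-\<alpha> - 1) else 0))"

end

theory Submission
  imports Defs
begin

text \<open>If \<open>\<rho>(N_n, N_n^(K)) > \<epsilon>\<close> with \<open>2^-I < \<epsilon>\<close>, the two point measures must differ on one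
  of the test functions \<open>h_1, \<dots>, h_I\<close>, which all vanish on some \<open>(-d, d)\<close>. Hence some edge of
  generation at most \<open>n - K\<close> carries a mark with \<open>|X_e| \<ge> d b_n\<close>. The expected number of such
  edges is \<open>\<Sum>_{m \<le> n-K} \<mu>^m P(|X| \<ge> d b_n) \<le> \<mu>/(\<mu>-1) \<mu>^-K \<mu>^n P(|X| \<ge> d b_n)\<close>, and
  \<open>\<mu>^n P(|X| \<ge> d b_n)\<close> stays bounded because the vague convergence hypothesis applies to a
  continuous ramp dominating the indicator of \<open>{|x| \<ge> d}\<close>. So the probability is \<open>O(\<mu>^-K)\<close> uniformly in
  \<open>n\<close>; conditioning on survival only divides by a fixed constant.\<close>

lemma nn_integral_lists_of_length_prod:
  fixes a :: "nat \<Rightarrow> ennreal"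
  shows "(\<integral>\<^sup>+u. indicator {u. length u = m} u * (\<Prod>k<m. a (u ! k)) \<partial>count_space UNIV)
         = (\<integral>\<^sup>+j. a j \<partial>count_space UNIV) ^ m"
proof (induction m)
  case 0
  have "(\<lambda>u::nat list. indicator {u. length u = 0} u * (\<Prod>k<0. a (u ! k))) = indicator {[]}"
    by (auto simp: indicator_def)
  then show ?case by simp
next
  case (Suc m)
  define g where "g u = indicator {u. length u = Suc m} u * (\<Prod>k<Suc m. a (u ! k))" for u
  have Cons_bij: "bij_betw (\<lambda>p. fst p # snd p) (UNIV :: (nat \<times> nat list) set) (UNIV - {[]})"
    by (auto simp: bij_betw_def inj_on_def image_def neq_Nil_conv)
  have "(\<integral>\<^sup>+u. g u \<partial>count_space UNIV) = (\<integral>\<^sup>+u. g u \<partial>count_space (UNIV - {[]}))"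
    by (rule nn_integral_count_space_eq[symmetric]) (auto simp: g_def)
  also have "\<dots> = (\<integral>\<^sup>+p. g (fst p # snd p) \<partial>count_space UNIV)"
    by (rule nn_integral_bij_count_space[OF Cons_bij, symmetric])
  also have "\<dots> = (\<integral>\<^sup>+j. \<integral>\<^sup>+v. g (j # v) \<partial>count_space UNIV \<partial>count_space UNIV)"
    by (subst nn_integral_fst_count_space[symmetric]) simp
  also have "\<dots> = (\<integral>\<^sup>+j. a j * (\<integral>\<^sup>+v. indicator {u. length u = m} v * (\<Prod>k<m. a (v ! k))
                      \<partial>count_space UNIV) \<partial>count_space UNIV)"
    by (auto simp: g_def prod.lessThan_Suc_shift indicator_def mult.assoc
             simp del: prod.lessThan_Suc simp flip: nn_integral_cmult intro!: nn_integral_cong)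
  also have "\<dots> = (\<integral>\<^sup>+j. a j \<partial>count_space UNIV) ^ Suc m"
    by (simp add: Suc nn_integral_multc)
  finally show ?case by (simp add: g_def)
qed

lemma nn_integral_of_nat_eq_sum_emeasure_less:
  fixes \<xi> :: "'a \<Rightarrow> nat"
  assumes [measurable]: "\<xi> \<in> measurable M (count_space UNIV)"
  shows "(\<integral>\<^sup>+w. ennreal (real (\<xi> w)) \<partial>M) = (\<integral>\<^sup>+j. emeasure M {w\<in>space M. j < \<xi> w} \<partial>count_space UNIV)"
proof -
  have count: "ennreal (real n) = (\<integral>\<^sup>+j. indicator {..<n} j \<partial>count_space UNIV)" for n
    by (simp add: ennreal_of_nat_eq_real_of_nat)
  have "(\<integral>\<^sup>+w. ennreal (real (\<xi> w)) \<partial>M)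
      = (\<integral>\<^sup>+w. \<integral>\<^sup>+j. indicator {w\<in>space M. j < \<xi> w} w \<partial>count_space UNIV \<partial>M)"
    by (rule nn_integral_cong) (auto simp: count indicator_def intro!: nn_integral_cong)
  also have "\<dots> = (\<integral>\<^sup>+j. \<integral>\<^sup>+w. indicator {w\<in>space M. j < \<xi> w} w \<partial>M \<partial>count_space UNIV)"
    by (rule nn_integral_count_space_nn_integral) auto
  finally show ?thesis by simp
qed

lemma emeasure_UN_countable_le:
  assumes "countable U" and [measurable]: "\<And>u. u \<in> U \<Longrightarrow> B u \<in> sets M"
  shows "emeasure M (\<Union>u\<in>U. B u) \<le> (\<integral>\<^sup>+u. emeasure M (B u) \<partial>count_space U)"
proof -
  have UN_sets: "(\<Union>u\<in>U. B u) \<in> sets M"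
    using assms by (intro sets.countable_UN'') auto
  have "indicator (\<Union>u\<in>U. B u) w \<le> (\<integral>\<^sup>+u. indicator (B u) w \<partial>count_space U)" for w
  proof (cases "w \<in> (\<Union>u\<in>U. B u)")
    case True
    then obtain u0 where "u0 \<in> U" "w \<in> B u0" by auto
    then have "(\<integral>\<^sup>+u. indicator {u0} u \<partial>count_space U) \<le> (\<integral>\<^sup>+u. indicator (B u) w \<partial>count_space U)"
      by (intro nn_integral_mono) (auto simp: indicator_def)
    with \<open>u0 \<in> U\<close> True show ?thesis by simp
  qed simp
  then have "emeasure M (\<Union>u\<in>U. B u) \<le> (\<integral>\<^sup>+w. \<integral>\<^sup>+u. indicator (B u) w \<partial>count_space U \<partial>M)"
    using UN_sets by (simp flip: nn_integral_indicator add: nn_integral_mono)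
  also have "\<dots> = (\<integral>\<^sup>+u. emeasure M (B u) \<partial>count_space U)"
    using assms by (simp add: nn_integral_count_space_nn_integral cong: nn_integral_cong_simp)
  finally show ?thesis .
qed

lemma sum_power_atLeast1_le:
  fixes \<mu> :: real
  assumes "\<mu> > 1"
  shows "(\<Sum>m=1..N. \<mu> ^ m) \<le> \<mu> ^ Suc N / (\<mu> - 1)"
proof -
  have "(\<Sum>m=1..N. \<mu> ^ m) = (\<mu> ^ Suc N - \<mu>) / (\<mu> - 1)"
    using assms by (cases N) (auto simp: sum_gp field_simps)
  also have "\<dots> \<le> \<mu> ^ Suc N / (\<mu> - 1)"
    using assms by (intro divide_right_mono) auto
  finally show ?thesis .
qed

lemma sum_power_truncated_le:
  fixes \<mu> \<tau> C :: real
  assumes "\<mu> > 1" "\<tau> \<ge> 0" "\<mu> ^ n * \<tau> \<le> C"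
  shows "(\<Sum>m=1..n-K. \<mu> ^ m) * \<tau> \<le> C * \<mu> / (\<mu> - 1) / \<mu> ^ K"
proof (cases "K \<le> n")
  case True
  have "(\<Sum>m=1..n-K. \<mu> ^ m) * \<tau> \<le> \<mu> ^ Suc (n - K) / (\<mu> - 1) * \<tau>"
    using assms by (intro mult_right_mono sum_power_atLeast1_le) auto
  also have "\<dots> = \<mu> ^ n * \<tau> * \<mu> / (\<mu> - 1) / \<mu> ^ K"
    using assms True by (simp add: field_simps flip: power_add)
  also have "\<dots> \<le> C * \<mu> / (\<mu> - 1) / \<mu> ^ K"
    using assms by (intro divide_right_mono mult_right_mono) auto
  finally show ?thesis .
next
  case False
  have "0 \<le> C"
    using assms by (smt (verit) zero_le_mult_iff zero_le_power)
  with assms have "0 \<le> C * \<mu> / (\<mu> - 1) / \<mu> ^ K"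
    by (intro divide_nonneg_nonneg mult_nonneg_nonneg) auto
  with False show ?thesis by simp
qed

lemma tendsto_limsup_zero_if_bounded:
  fixes a :: "nat \<Rightarrow> nat \<Rightarrow> real"
  assumes "\<And>K n. 0 \<le> a K n" "\<And>K n. a K n \<le> c K" and "c \<longlonglongrightarrow> 0"
  shows "(\<lambda>K. limsup (\<lambda>n. ereal (a K n))) \<longlonglongrightarrow> 0"
proof (rule tendsto_sandwich[where f="\<lambda>K. 0" and h="\<lambda>K. ereal (c K)"])
  show "\<forall>\<^sub>F K in sequentially. 0 \<le> limsup (\<lambda>n. ereal (a K n))"
    using assms(1) by (intro always_eventually allI le_Limsup) auto
  show "\<forall>\<^sub>F K in sequentially. limsup (\<lambda>n. ereal (a K n)) \<le> ereal (c K)"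
    using assms(2) by (intro always_eventually allI Limsup_bounded) auto
  show "(\<lambda>K. ereal (c K)) \<longlonglongrightarrow> 0"
    using assms(3) by (simp add: zero_ereal_def)
qed simp

lemma rho_pm_le_if_agree:
  assumes "\<And>i. i < I \<Longrightarrow> m1 (hs (Suc i)) = m2 (hs (Suc i))"
  shows "rho_pm hs m1 m2 \<le> (1/2) ^ I"
proof -
  define t where "t i = (1/2::real) ^ Suc i * min \<bar>m1 (hs (Suc i)) - m2 (hs (Suc i))\<bar> 1" for i
  define g where "g i = (if i < I then 0 else (1/2::real) ^ Suc i)" for i
  have g_summable: "summable g"
    by (rule summable_comparison_test[of _ "\<lambda>i. (1/2::real) ^ Suc i"]) (auto simp: g_def)
  have "rho_pm hs m1 m2 = (\<Sum>i. t i)"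
    by (simp add: rho_pm_def t_def)
  also have "\<dots> \<le> (\<Sum>i. g i)"
    by (intro suminf_le summable_comparison_test[OF _ g_summable])
       (auto simp: t_def g_def assms)
  also have "\<dots> = (\<Sum>i. g (i + I))"
  proof -
    have "(\<Sum>i<I. g i) = 0" by (simp add: g_def)
    then show ?thesis using suminf_split_initial_segment[OF g_summable, of I] by simp
  qed
  also have "\<dots> = (\<Sum>i. (1/2) ^ Suc I * (1/2) ^ i)"
    by (simp add: g_def power_add mult.commute)
  also have "\<dots> = (1/2) ^ I"
    by (subst suminf_mult) (simp_all add: suminf_geometric)
  finally show ?thesis .
qed

lemma common_vanishing_radius:
  fixes I :: nat
  assumes "\<And>i. compact_supp_E (f i)"
  obtains d where "d > 0" "\<And>i x. i < I \<Longrightarrow> \<bar>x\<bar> < d \<Longrightarrow> f i x = 0"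
proof (induction I arbitrary: thesis)
  case 0
  show ?case by (rule 0[of 1]) auto
next
  case (Suc I)
  obtain d where d: "d > 0" "\<And>i x. i < I \<Longrightarrow> \<bar>x\<bar> < d \<Longrightarrow> f i x = 0"
    using Suc.IH by blast
  obtain e where e: "e > 0" "\<And>x. \<bar>x\<bar> < e \<Longrightarrow> f I x = 0"
    using assms[of I] unfolding compact_supp_E_def by blast
  show ?case
    by (rule Suc.prems[of "min d e"]) (use d e less_Suc_eq in auto)
qed

lemma take_in_gen: "v \<in> gen xi n w \<Longrightarrow> m \<le> n \<Longrightarrow> take m v \<in> gen xi m w"
  by (auto simp: gen_def in_tree_def min_def)

lemma Ntilde_eq_NtildeK_if_early_marks_small:
  assumes h_small: "\<And>x. \<bar>x\<bar> < \<delta> \<Longrightarrow> h x = 0" and "b n > 0"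
    and marks_small: "\<And>m u. m \<in> {1..n - K} \<Longrightarrow> u \<in> gen xi m w \<Longrightarrow> \<bar>X u w\<bar> < \<delta> * b n"
  shows "Ntilde xi X b n h w = NtildeK xi X b K n h w"
  unfolding Ntilde_def NtildeK_def
proof (rule sum.cong[OF refl], rule sum.mono_neutral_right)
  fix v assume v: "v \<in> gen xi n w"
  show "\<forall>m\<in>{1..n} - {n - K<..n}. h (X (take m v) w / b n) = 0"
  proof
    fix m assume m: "m \<in> {1..n} - {n - K<..n}"
    then have "\<bar>X (take m v) w\<bar> < \<delta> * b n"
      by (auto intro!: marks_small take_in_gen[OF v])
    with \<open>b n > 0\<close> show "h (X (take m v) w / b n) = 0"
      by (intro h_small) (simp add: divide_less_eq)
  qed
qed auto

lemma rho_truncation_gt_imp_early_mark: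
  assumes "(1/2) ^ I < \<epsilon>" and "b n > 0"
    and hs_small: "\<And>i x. i < I \<Longrightarrow> \<bar>x\<bar> < d \<Longrightarrow> hs (Suc i) x = 0"
    and "\<epsilon> < rho_pm hs (\<lambda>h. Ntilde xi X b n h w) (\<lambda>h. NtildeK xi X b K n h w)"
  shows "\<exists>m\<in>{1..n-K}. \<exists>u\<in>gen xi m w. d * b n \<le> \<bar>X u w\<bar>"
proof (rule ccontr)
  assume "\<not> ?thesis"
  then have "Ntilde xi X b n (hs (Suc i)) w = NtildeK xi X b K n (hs (Suc i)) w" if "i < I" for i
    using that \<open>b n > 0\<close> by (intro Ntilde_eq_NtildeK_if_early_marks_small hs_small) force+
  then have "rho_pm hs (\<lambda>h. Ntilde xi X b n h w) (\<lambda>h. NtildeK xi X b K n h w) \<le> (1/2) ^ I"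
    by (intro rho_pm_le_if_agree)
  with assms(1,4) show False by simp
qed

definition ramp :: "real \<Rightarrow> real \<Rightarrow> real" where
  "ramp d x = min 1 (max 0 (2 * \<bar>x\<bar> / d - 1))"

lemma indicator_le_ramp: "d > 0 \<Longrightarrow> indicator {x. d \<le> \<bar>x\<bar>} x \<le> ramp d x"
  by (auto simp: ramp_def indicator_def le_divide_eq)

lemma vague_test_ramp:
  assumes "d > 0"
  shows "vague_test (ramp d)"
  unfolding vague_test_def compact_supp_E_def
proof (intro conjI)
  show "continuous_on UNIV (ramp d)"
    unfolding ramp_def by (intro continuous_intros) (use assms in auto)
  show "\<exists>\<delta>>0. \<forall>x. \<bar>x\<bar> < \<delta> \<longrightarrow> ramp d x = 0"
    by (intro exI[of _ "d/2"]) (use assms in \<open>auto simp: ramp_def field_simps\<close>)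
  have "\<forall>\<^sub>F x in at_top. ramp d x = 1"
    using eventually_ge_at_top[of d] by eventually_elim (use assms in \<open>auto simp: ramp_def field_simps\<close>)
  then show "\<exists>l. (ramp d \<longlongrightarrow> l) at_top" by (intro exI tendsto_eventually)
  have "\<forall>\<^sub>F x in at_bot. ramp d x = 1"
    using eventually_le_at_bot[of "-d"] by eventually_elim (use assms in \<open>auto simp: ramp_def field_simps\<close>)
  then show "\<exists>l. (ramp d \<longlongrightarrow> l) at_bot" by (intro exI tendsto_eventually)
qed

lemma (in prob_space) prob_abs_ge_le_integral_ramp:
  assumes [measurable]: "Y \<in> borel_measurable M" and "d > 0" "c > 0"
  shows "prob {w\<in>space M. d * c \<le> \<bar>Y w\<bar>} \<le> (\<integral>w. ramp d (Y w / c) \<partial>M)"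
proof -
  have ramp_integrable: "integrable M (\<lambda>w. ramp d (Y w / c))"
    by (rule integrable_const_bound[where B=1]) (auto simp: ramp_def)
  have "prob {w\<in>space M. d * c \<le> \<bar>Y w\<bar>} = (\<integral>w. indicator {w\<in>space M. d * c \<le> \<bar>Y w\<bar>} w \<partial>M)"
    by simp
  also have "\<dots> \<le> (\<integral>w. ramp d (Y w / c) \<partial>M)"
  proof (rule integral_mono[OF _ ramp_integrable])
    fix w assume "w \<in> space M"
    then show "indicator {w\<in>space M. d * c \<le> \<bar>Y w\<bar>} w \<le> ramp d (Y w / c)"
      using indicator_le_ramp[OF \<open>d > 0\<close>, of "Y w / c"] \<open>c > 0\<close>
      by (auto simp: indicator_def le_divide_eq mult.commute split: if_splits)
  qed (auto simp: less_top[symmetric])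
  finally show ?thesis .
qed

lemma (in prob_space) bounded_scaled_tail_if_convergent:
  assumes [measurable]: "Y \<in> borel_measurable M"
    and "d > 0" "\<mu> \<ge> 0" "\<And>n. b n > 0"
    and "convergent (\<lambda>n. \<mu> ^ n * (\<integral>w. ramp d (Y w / b n) \<partial>M))"
  obtains C where "\<And>n. \<mu> ^ n * prob {w\<in>space M. d * b n \<le> \<bar>Y w\<bar>} \<le> C"
proof -
  obtain C where C: "\<And>n. norm (\<mu> ^ n * (\<integral>w. ramp d (Y w / b n) \<partial>M)) \<le> C"
    using BseqE[OF convergent_imp_Bseq[OF assms(5)]] by metis
  have "\<mu> ^ n * prob {w\<in>space M. d * b n \<le> \<bar>Y w\<bar>} \<le> C" for n
  proof -
    have "\<mu> ^ n * prob {w\<in>space M. d * b n \<le> \<bar>Y w\<bar>} \<le> \<mu> ^ n * (\<integral>w. ramp d (Y w / b n) \<partial>M)"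
      using assms by (intro mult_left_mono prob_abs_ge_le_integral_ramp) auto
    also have "\<dots> \<le> C"
      using C[of n] by simp
    finally show ?thesis .
  qed
  then show thesis ..
qed

locale galton_watson_marks = prob_space M
  for M :: "'a measure" +
  fixes xi :: "nat list \<Rightarrow> 'a \<Rightarrow> nat" and X :: "nat list \<Rightarrow> 'a \<Rightarrow> real"
  assumes measurable_xi [measurable]: "\<And>u. xi u \<in> measurable M (count_space UNIV)"
    and measurable_X [measurable]: "\<And>u. X u \<in> borel_measurable M"
    and indep: "indep_vars (\<lambda>_. borel)
                  (\<lambda>i. case i of Inl u \<Rightarrow> (\<lambda>w. real (xi u w)) | Inr u \<Rightarrow> X u) UNIV"
    and distr_xi: "\<And>u. distr M (count_space UNIV) (xi u) = distr M (count_space UNIV) (xi [])"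
    and distr_X: "\<And>u. u \<noteq> [] \<Longrightarrow> distr M borel (X u) = distr M borel (X [0])"
    and integrable_xi: "integrable M (\<lambda>w. real (xi [] w))"
begin

abbreviation offspring_mean :: real where
  "offspring_mean \<equiv> expectation (\<lambda>w. real (xi [] w))"

lemma prob_offspring_gt: "prob {w\<in>space M. j < xi u w} = prob {w\<in>space M. j < xi [] w}"
proof -
  have "prob {w\<in>space M. j < xi u w} = measure (distr M (count_space UNIV) (xi u)) {j<..}"
    by (subst measure_distr) (auto simp: vimage_def Int_def conj_commute)
  also have "\<dots> = prob {w\<in>space M. j < xi [] w}"
    by (subst distr_xi, subst measure_distr) (auto simp: vimage_def Int_def conj_commute)
  finally show ?thesis .
qed

lemma prob_mark_ge: "u \<noteq> [] \<Longrightarrow> prob {w\<in>space M. t \<le> \<bar>X u w\<bar>} = prob {w\<in>space M. t \<le> \<bar>X [0] w\<bar>}"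
proof -
  assume "u \<noteq> []"
  have "prob {w\<in>space M. t \<le> \<bar>X u w\<bar>} = measure (distr M borel (X u)) {x. t \<le> \<bar>x\<bar>}"
    by (subst measure_distr) (auto simp: vimage_def Int_def conj_commute)
  also have "\<dots> = prob {w\<in>space M. t \<le> \<bar>X [0] w\<bar>}"
    by (subst distr_X[OF \<open>u \<noteq> []\<close>], subst measure_distr) (auto simp: vimage_def Int_def conj_commute)
  finally show ?thesis .
qed

lemma prob_in_tree_and_mark:
  assumes "u \<noteq> []"
  shows "prob {w\<in>space M. in_tree xi w u \<and> t \<le> \<bar>X u w\<bar>}
     = (\<Prod>k<length u. prob {w\<in>space M. u ! k < xi [] w}) * prob {w\<in>space M. t \<le> \<bar>X [0] w\<bar>}"
proof -
  let ?Y = "\<lambda>i. case i of Inl u \<Rightarrow> (\<lambda>w. real (xi u w)) | Inr u \<Rightarrow> X u"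
  define J where "J = insert (Inr u) ((\<lambda>k. Inl (take k u)) ` {..<length u})"
  define A where "A j = (case j of Inl v \<Rightarrow> {w\<in>space M. u ! length v < xi v w}
                                | Inr v \<Rightarrow> {w\<in>space M. t \<le> \<bar>X v w\<bar>})" for j
  have "indep_sets (\<lambda>i. {?Y i -` B \<inter> space M | B. B \<in> sets borel}) UNIV"
    using indep unfolding indep_vars_def2 by auto
  moreover have "A j \<in> {?Y j -` B \<inter> space M | B. B \<in> sets borel}" for j
  proof (cases j)
    case (Inl v)
    then have "A j = ?Y j -` {real (u ! length v)<..} \<inter> space M"
      by (auto simp: A_def)
    then show ?thesis by (intro CollectI exI[of _ "{real (u ! length v)<..}"]) auto
  next
    case (Inr v)
    then have "A j = ?Y j -` {x. t \<le> \<bar>x\<bar>} \<inter> space M"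
      by (auto simp: A_def)
    moreover have "{x::real. t \<le> \<bar>x\<bar>} \<in> sets borel" by measurable
    ultimately show ?thesis by (intro CollectI exI[of _ "{x::real. t \<le> \<bar>x\<bar>}"]) auto
  qed
  ultimately have indep_A: "prob (\<Inter>j\<in>J. A j) = (\<Prod>j\<in>J. prob (A j))"
    by (intro indep_setsD) (auto simp: J_def)
  have inj: "inj_on (\<lambda>k. Inl (take k u)) {..<length u}"
    by (auto simp: inj_on_def dest: arg_cong[where f=length])
  have "prob {w\<in>space M. in_tree xi w u \<and> t \<le> \<bar>X u w\<bar>} = prob (\<Inter>j\<in>J. A j)"
    by (rule arg_cong[where f=prob]) (auto simp: J_def A_def in_tree_def)
  also have "\<dots> = (\<Prod>k<length u. prob (A (Inl (take k u)))) * prob (A (Inr u))"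
    unfolding indep_A unfolding J_def by (subst prod.insert) (auto simp: prod.reindex[OF inj] mult.commute)
  also have "\<dots> = (\<Prod>k<length u. prob {w\<in>space M. u ! k < xi [] w}) * prob {w\<in>space M. t \<le> \<bar>X [0] w\<bar>}"
  proof -
    have "prob (A (Inl (take k u))) = prob {w\<in>space M. u ! k < xi [] w}" if "k < length u" for k
      using that prob_offspring_gt[of "u ! k" "take k u"] by (simp add: A_def min_def)
    moreover have "prob (A (Inr u)) = prob {w\<in>space M. t \<le> \<bar>X [0] w\<bar>}"
      using prob_mark_ge[OF assms] by (simp add: A_def)
    ultimately show ?thesis
      by (metis (no_types, lifting) lessThan_iff prod.cong)
  qed
  finally show ?thesis .
qed

lemma nn_integral_emeasure_offspring_gt:
  "(\<integral>\<^sup>+j. emeasure M {w\<in>space M. j < xi [] w} \<partial>count_space UNIV) = ennreal offspring_mean"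
proof -
  have "(\<integral>\<^sup>+w. ennreal (real (xi [] w)) \<partial>M) = ennreal offspring_mean"
    by (rule nn_integral_eq_integral[OF integrable_xi]) simp
  then show ?thesis
    by (simp only: nn_integral_of_nat_eq_sum_emeasure_less[OF measurable_xi])
qed

lemma marked_vertex_in_gen_eq_UN:
  "{w\<in>space M. \<exists>u\<in>gen xi m w. t \<le> \<bar>X u w\<bar>}
     = (\<Union>u\<in>{u. length u = m}. {w\<in>space M. in_tree xi w u \<and> t \<le> \<bar>X u w\<bar>})"
  by (auto simp: gen_def)

lemma sets_marked_vertex_in_gen [measurable]:
  "{w\<in>space M. \<exists>u\<in>gen xi m w. t \<le> \<bar>X u w\<bar>} \<in> sets M"
proof -
  have "{w\<in>space M. in_tree xi w u \<and> t \<le> \<bar>X u w\<bar>} \<in> sets M" for u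
    unfolding in_tree_def by measurable
  then show ?thesis
    unfolding marked_vertex_in_gen_eq_UN by (intro sets.countable_UN'') auto
qed

lemma prob_marked_vertex_in_gen_le:
  assumes "m \<ge> 1"
  shows "prob {w\<in>space M. \<exists>u\<in>gen xi m w. t \<le> \<bar>X u w\<bar>}
           \<le> offspring_mean ^ m * prob {w\<in>space M. t \<le> \<bar>X [0] w\<bar>}"
proof -
  define B where "B u = {w\<in>space M. in_tree xi w u \<and> t \<le> \<bar>X u w\<bar>}" for u
  define a where "a j = emeasure M {w\<in>space M. j < xi [] w}" for j
  define \<tau> where "\<tau> = prob {w\<in>space M. t \<le> \<bar>X [0] w\<bar>}"
  have B_sets [measurable]: "B u \<in> sets M" for u
    unfolding B_def in_tree_def by measurable
  have "emeasure M {w\<in>space M. \<exists>u\<in>gen xi m w. t \<le> \<bar>X u w\<bar>} = emeasure M (\<Union>u\<in>{u. length u = m}. B u)"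
    by (simp add: marked_vertex_in_gen_eq_UN B_def)
  also have "\<dots> \<le> (\<integral>\<^sup>+u. emeasure M (B u) \<partial>count_space {u. length u = m})"
    by (rule emeasure_UN_countable_le) (auto intro: countable_subset[OF subset_UNIV])
  also have "\<dots> = (\<integral>\<^sup>+u. indicator {u. length u = m} u * (\<Prod>k<m. a (u ! k)) * ennreal \<tau> \<partial>count_space UNIV)"
  proof (subst nn_integral_count_space_indicator, simp, intro nn_integral_cong)
    fix u :: "nat list"
    show "emeasure M (B u) * indicator {u. length u = m} u
          = indicator {u. length u = m} u * (\<Prod>k<m. a (u ! k)) * ennreal \<tau>"
    proof (cases "length u = m")
      case True
      with assms have "u \<noteq> []" by auto
      with True show ?thesis
        by (simp add: emeasure_eq_measure B_def a_def \<tau>_def prob_in_tree_and_mark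
                      ennreal_mult prod_ennreal prod_nonneg)
    qed simp
  qed
  also have "\<dots> = ennreal (offspring_mean ^ m * \<tau>)"
  proof -
    have "(\<integral>\<^sup>+j. a j \<partial>count_space UNIV) = ennreal offspring_mean"
      unfolding a_def by (rule nn_integral_emeasure_offspring_gt)
    moreover have "offspring_mean \<ge> 0" by simp
    ultimately show ?thesis
      by (simp add: nn_integral_multc nn_integral_lists_of_length_prod ennreal_mult ennreal_power \<tau>_def)
  qed
  finally show ?thesis
    by (simp add: emeasure_eq_measure \<tau>_def)
qed

lemma prob_early_mark_le:
  "prob {w\<in>space M. \<exists>m\<in>{1..N}. \<exists>u\<in>gen xi m w. t \<le> \<bar>X u w\<bar>}
     \<le> (\<Sum>m=1..N. offspring_mean ^ m) * prob {w\<in>space M. t \<le> \<bar>X [0] w\<bar>}"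
proof -
  have "{w\<in>space M. \<exists>m\<in>{1..N}. \<exists>u\<in>gen xi m w. t \<le> \<bar>X u w\<bar>}
          = (\<Union>m\<in>{1..N}. {w\<in>space M. \<exists>u\<in>gen xi m w. t \<le> \<bar>X u w\<bar>})"
    by auto
  also have "prob \<dots> \<le> (\<Sum>m=1..N. prob {w\<in>space M. \<exists>u\<in>gen xi m w. t \<le> \<bar>X u w\<bar>})"
    by (intro finite_measure_subadditive_finite) auto
  also have "\<dots> \<le> (\<Sum>m=1..N. offspring_mean ^ m * prob {w\<in>space M. t \<le> \<bar>X [0] w\<bar>})"
    by (intro sum_mono prob_marked_vertex_in_gen_le) auto
  finally show ?thesis
    by (simp add: sum_distrib_right)
qed

end

theorem lemma3p2:
  fixes M :: "'a measure" and xi :: "nat list \<Rightarrow> 'a \<Rightarrow> nat" and X :: "nat list \<Rightarrow> 'a \<Rightarrow> real"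
    and \<alpha> p q \<epsilon> :: real and b :: "nat \<Rightarrow> real" and hs :: "nat \<Rightarrow> real \<Rightarrow> real"
  assumes P: "prob_space M"
    and meas_xi: "\<And>u. xi u \<in> measurable M (count_space UNIV)"
    and meas_X: "\<And>u. X u \<in> borel_measurable M"
    and indep: "prob_space.indep_vars M (\<lambda>_. borel)
                  (\<lambda>i. case i of Inl u \<Rightarrow> (\<lambda>w. real (xi u w)) | Inr u \<Rightarrow> X u) UNIV"
    and id_xi: "\<And>u. distr M (count_space UNIV) (xi u) = distr M (count_space UNIV) (xi [])"
    and id_X: "\<And>u. u \<noteq> [] \<Longrightarrow> distr M borel (X u) = distr M borel (X [0])"
    and int_mean: "integrable M (\<lambda>w. real (xi [] w))"
    and mean_gt: "(\<integral>w. real (xi [] w) \<partial>M) > 1"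
    and llog: "integrable M (\<lambda>w. real (xi [] w) * max 0 (ln (real (xi [] w))))"
    and alpha_pos: "\<alpha> > 0"
    and tail: "\<exists>L. slowly_varying L \<and>
                 (\<forall>x>0. measure M {w\<in>space M. \<bar>X [0] w\<bar> > x} = x powr (-\<alpha>) * L x)"
    and pq: "p \<ge> 0" "q \<ge> 0" "p + q = 1"
    and tail_p: "((\<lambda>x. measure M {w\<in>space M. X [0] w > x} /
                      measure M {w\<in>space M. \<bar>X [0] w\<bar> > x}) \<longlongrightarrow> p) at_top"
    and tail_q: "((\<lambda>x. measure M {w\<in>space M. X [0] w < - x} /
                      measure M {w\<in>space M. \<bar>X [0] w\<bar> > x}) \<longlongrightarrow> q) at_top"
    and b_pos: "\<And>n. b n > 0"
    and vague: "\<And>f. vague_test f \<Longrightarrow>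
         ((\<lambda>n. (\<integral>w. real (xi [] w) \<partial>M) ^ n * (\<integral>w. f (X [0] w / b n) \<partial>M))
            \<longlongrightarrow> (\<integral>x. f x \<partial>nu_alpha \<alpha> p q)) sequentially"
    and hs_nonneg: "\<And>i x. hs i x \<ge> 0"
    and hs_lip: "\<And>i. \<exists>C. C-lipschitz_on UNIV (hs i)"
    and hs_supp: "\<And>i. compact_supp_E (hs i)"
    and eps: "\<epsilon> > 0"
  shows "((\<lambda>K. limsup (\<lambda>n. ereal (
            measure M ({w\<in>space M. rho_pm hs (\<lambda>h. Ntilde xi X b n h w) (\<lambda>h. NtildeK xi X b K n h w) > \<epsilon>}
                       \<inter> {w\<in>space M. \<forall>m. gen xi m w \<noteq> {}})
            / measure M {w\<in>space M. \<forall>m. gen xi m w \<noteq> {}})))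
          \<longlongrightarrow> 0) sequentially"
proof -
  interpret galton_watson_marks M xi X
    by (rule galton_watson_marks.intro[OF P galton_watson_marks_axioms.intro])
       (fact meas_xi meas_X indep id_xi id_X int_mean)+
  have \<mu>: "offspring_mean > 1" using mean_gt .
  obtain I :: nat where I: "(1/2) ^ I < \<epsilon>"
    using real_arch_pow_inv[OF eps, of "1/2"] by auto
  obtain d where "d > 0" and d: "\<And>i x. i < I \<Longrightarrow> \<bar>x\<bar> < d \<Longrightarrow> hs (Suc i) x = 0"
    using common_vanishing_radius[of "\<lambda>i. hs (Suc i)"] hs_supp by blast
  obtain C where C: "\<And>n. offspring_mean ^ n * prob {w\<in>space M. d * b n \<le> \<bar>X [0] w\<bar>} \<le> C"
    using bounded_scaled_tail_if_convergent[OF measurable_X \<open>d > 0\<close> _ b_pos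
            convergentI[OF vague[OF vague_test_ramp[OF \<open>d > 0\<close>]]]] \<mu>
    by auto
  define S where "S = {w\<in>space M. \<forall>m. gen xi m w \<noteq> {}}"
  define E where "E K n = {w\<in>space M. rho_pm hs (\<lambda>h. Ntilde xi X b n h w) (\<lambda>h. NtildeK xi X b K n h w) > \<epsilon>}" for K n
  define c where "c K = C * offspring_mean / (offspring_mean - 1) / offspring_mean ^ K" for K
  have "prob (E K n \<inter> S) \<le> c K" for K n
  proof -
    have "E K n \<inter> S \<subseteq> {w\<in>space M. \<exists>m\<in>{1..n-K}. \<exists>u\<in>gen xi m w. d * b n \<le> \<bar>X u w\<bar>}"
      using rho_truncation_gt_imp_early_mark[where hs=hs and b=b, OF I b_pos d] by (auto simp: E_def)
    then have "prob (E K n \<inter> S) \<le> (\<Sum>m=1..n-K. offspring_mean ^ m) * prob {w\<in>space M. d * b n \<le> \<bar>X [0] w\<bar>}"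
      by (intro order.trans[OF finite_measure_mono prob_early_mark_le]) auto
    also have "\<dots> \<le> c K"
      unfolding c_def using \<mu> C by (intro sum_power_truncated_le) auto
    finally show ?thesis .
  qed
  moreover have "c \<longlonglongrightarrow> 0"
    unfolding c_def using \<mu> by (rule LIMSEQ_divide_realpow_zero)
  ultimately show ?thesis
    unfolding E_def[symmetric] S_def[symmetric]
    by (intro tendsto_limsup_zero_if_bounded[where c="\<lambda>K. c K / prob S"])
       (auto intro: divide_right_mono simp: tendsto_divide_zero)
qed

end
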